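(* Let $\underline{\mathbb{G}}=(\mathbb{G},\mathcal{V},\omega_{\mathcal{V}},\mathcal{F},\omega_{\mathcal{F}})$ be a packaged ribbon graph with dual $\underline{\mathbb{G}}^*$. Then \[\boldsymbol{T}(\underline{\mathbb{G}};\boldsymbol{x},\boldsymbol{y})=\boldsymbol{T}(\underline{\mathbb{G}}^*; \boldsymbol{y},\boldsymbol{x}),\] i.e. the right-hand side is obtained by evaluating $\boldsymbol{T}(\underline{\mathbb{G}}^*;\cdot,\cdot)$ with the roles of the variable tuples $\boldsymbol{x}$ and $\boldsymbol{y}$ interchanged.
   Context: All ribbon graphs are orientable. A ribbon graph $\mathbb{G}=(V,E)$ is an orientable surface with boundary formed as a union of discs $V$ (vertices) and discs $E$ (edges) meeting in disjoint arcs, each arc on the boundary of exactly one vertex and one edge, each edge containing two arcs. For a ribbon graph, $v,e,f,k$ denote numbers of vertices, edges, boundary components, components; for a graph, $v,e,k$ likewise and nullity $n=e-v+k$. $\mathbb{G}|A$ ($A\subseteq E$) is the spanning ribbon subgraph with edge set $A$; $A^c=E\setminus A$. The dual $\mathbb{G}^*$ is obtained by capping each boundary component of $\mathbb{G}$ with a disc; these discs are the vertices of $\mathbb{G}^*$, edges are those of $\mathbb{G}$; vertices of $\mathbb{G}^*$ are identified with boundary components of $\mathbb{G}$ and boundary components of $\mathbb{G}^*$ with vertices of $\mathbb{G}$. A packaged ribbon graph is $\underline{\mathbb{G}}=(\mathbb{G},\mathcal{V},\omega_{\mathcal{V}},\mathcal{F},\omega_{\mathcal{F}})$ with $\mathbb{G}=(V,E)$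 a ribbon graph with boundary components $F$, $\mathcal{V}$ a partition of $V$, $\mathcal{F}$ a partition of $F$, weightings $\omega_{\mathcal{V}}:\mathcal{V}\to\mathbb{N}_0$, $\omega_{\mathcal{F}}:\mathcal{F}\to\mathbb{N}_0$. Its dual is $\underline{\mathbb{G}}^*=(\mathbb{G}^*,\mathcal{F},\omega_{\mathcal{F}},\mathcal{V},\omega_{\mathcal{V}})$, where $\mathcal{F}$ is viewed as a partition of the vertices of $\mathbb{G}^*$ and $\mathcal{V}$ as a partition of the boundary components of $\mathbb{G}^*$. Packaging: for a ribbon graph $\mathbb{H}$ with partition $\mathcal{P}$ of its vertices and block weights $\omega$, $G(\mathbb{H};\mathcal{P})$ has vertex set $\mathcal{P}$ and an edge $([u],[v])$ for each edge $(u,v)$ of $\mathbb{H}$ (loops/multi-edges allowed), vertices weighted by $\omega$. For a subgraph $K$, $\mathbb{H}[K]$ is the ribbon subgraph of $\mathbb{H}$ consisting of all vertices in blocks that are vertices of $K$ and the edges corresponding to edges of $K$; $f(\mathbb{H}[K])$ is its number of boundary components; $\omega(K)$ is the sum of weights of vertices of $K$. The packaged surface Tutte polynomial, with $\boldsymbol{x}=(x,x_0,x_{1/2},x_1,\dots)$, $\boldsymbol{y}=(y,y_0,y_{1/2},y_1,\dots)$: \[\boldsymbol{T}(\underline{\mathbb{G}};\boldsymbol{x},\boldsymbol{y})= \sum_{A\subseteq E} x^{n(G(\mathbb{G}^*|A^c;\mathcal{F}))}y^{n(G(\mathbb{G}|A;\mathcal{V}))}\prod_{H \text{ cpt. of }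 G(\mathbb{G}^*|A^c;\mathcal{F})}x_{g(\mathbb{G}^*,H)}\prod_{K \text{ cpt. of } G(\mathbb{G}|A;\mathcal{V})}y_{g(\mathbb{G},K)},\] where $G(\mathbb{G}|A;\mathcal{V})$ uses weights $\omega_{\mathcal{V}}$, $G(\mathbb{G}^*|A^c;\mathcal{F})$ uses weights $\omega_{\mathcal{F}}$, $g(\mathbb{G},K)=\tfrac12(2k(K)+e(K)-v(K)+\omega_{\mathcal{V}}(K)-f(\mathbb{G}[K]))$ and $g(\mathbb{G}^*,H)=\tfrac12(2k(H)+e(H)-v(H)+\omega_{\mathcal{F}}(H)-f(\mathbb{G}^*[H]))$. *)

theory Defs
  imports Main "HOL-Combinatorics.Permutations" "HOL-Library.Disjoint_Sets"
begin

(* Orientable ribbon graphs as combinatorial maps (rotation systems) with explicitly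
   labelled vertex set and boundary-component (face) set.
   darts = half-edges; rot = cyclic order of darts around each vertex (sigma);
   alpha = fixed-point-free involution pairing the two ends of each edge;
   boundary components = orbits of rot o alpha, together with one boundary
   component for every isolated vertex. *)
record ('v, 'f, 'd) rgraph =
  rg_verts :: "'v set"
  rg_faces :: "'f set"
  rg_darts :: "'d set"
  rg_vert  :: "'d \<Rightarrow> 'v"
  rg_face  :: "'d \<Rightarrow> 'f"
  rg_rot   :: "'d \<Rightarrow> 'd"
  rg_alpha :: "'d \<Rightarrow> 'd"

definition rg_orbit :: "('d \<Rightarrow> 'd) \<Rightarrow> 'd \<Rightarrow> 'd set" where
  "rg_orbit p d = {(p ^^ n) d | n. True}"

definition ribbon_graph :: "('v, 'f, 'd) rgraph \<Rightarrow> bool" where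
  "ribbon_graph G \<longleftrightarrow>
     finite (rg_verts G) \<and> finite (rg_faces G) \<and> finite (rg_darts G) \<and>
     rg_rot G permutes rg_darts G \<and> rg_alpha G permutes rg_darts G \<and>
     (\<forall>d\<in>rg_darts G. rg_alpha G d \<noteq> d \<and> rg_alpha G (rg_alpha G d) = d) \<and>
     rg_vert G ` rg_darts G \<subseteq> rg_verts G \<and>
     rg_face G ` rg_darts G \<subseteq> rg_faces G \<and>
     (\<forall>d\<in>rg_darts G. \<forall>d'\<in>rg_darts G.
        rg_vert G d = rg_vert G d' \<longleftrightarrow> d' \<in> rg_orbit (rg_rot G) d) \<and>
     (\<forall>d\<in>rg_darts G. \<forall>d'\<in>rg_darts G.
        rg_face G d = rg_face G d' \<longleftrightarrow> d' \<in> rg_orbit (rg_rot G \<circ> rg_alpha G) d) \<and>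
     card (rg_verts G - rg_vert G ` rg_darts G) = card (rg_faces G - rg_face G ` rg_darts G)"

definition rg_edges :: "('v, 'f, 'd) rgraph \<Rightarrow> 'd set set" where
  "rg_edges G = {{d, rg_alpha G d} | d. d \<in> rg_darts G}"

definition rg_dual :: "('v, 'f, 'd) rgraph \<Rightarrow> ('f, 'v, 'd) rgraph" where
  "rg_dual G = \<lparr> rg_verts = rg_faces G, rg_faces = rg_verts G, rg_darts = rg_darts G,
                 rg_vert = rg_face G, rg_face = rg_vert G,
                 rg_rot = rg_rot G \<circ> rg_alpha G, rg_alpha = rg_alpha G \<rparr>"

definition packaged_rg ::
  "('v, 'f, 'd) rgraph \<Rightarrow> 'v set set \<Rightarrow> ('v set \<Rightarrow> nat) \<Rightarrow> 'f set set \<Rightarrow> ('f set \<Rightarrow> nat) \<Rightarrow> bool" where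
  "packaged_rg G PV wV PF wF \<longleftrightarrow>
     ribbon_graph G \<and> partition_on (rg_verts G) PV \<and> partition_on (rg_faces G) PF"

(* induced rotation on a subset S of darts (deleting edges) *)
definition sub_rot :: "('d \<Rightarrow> 'd) \<Rightarrow> 'd set \<Rightarrow> 'd \<Rightarrow> 'd" where
  "sub_rot r S d = (r ^^ (LEAST j. 0 < j \<and> (r ^^ j) d \<in> S)) d"

definition n_bdry :: "('d \<Rightarrow> 'v) \<Rightarrow> ('d \<Rightarrow> 'd) \<Rightarrow> ('d \<Rightarrow> 'd) \<Rightarrow> 'v set \<Rightarrow> 'd set set \<Rightarrow> nat" where
  "n_bdry vert r alpha W B =
     card {rg_orbit (sub_rot r (\<Union>B) \<circ> alpha) d | d. d \<in> \<Union>B}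
     + card {v \<in> W. \<forall>d\<in>\<Union>B. vert d \<noteq> v}"

definition pk_adj :: "('d \<Rightarrow> 'v) \<Rightarrow> 'v set set \<Rightarrow> 'd set set \<Rightarrow> ('v set \<times> 'v set) set" where
  "pk_adj vert P B = {(X, Y). X \<in> P \<and> Y \<in> P \<and>
     (\<exists>e\<in>B. \<exists>d\<in>e. \<exists>d'\<in>e. vert d \<in> X \<and> vert d' \<in> Y)}"

definition pk_comps :: "('d \<Rightarrow> 'v) \<Rightarrow> 'v set set \<Rightarrow> 'd set set \<Rightarrow> 'v set set set" where
  "pk_comps vert P B = (\<lambda>X. {Y. (X, Y) \<in> (pk_adj vert P B)\<^sup>*}) ` P"

definition comp_edges :: "('d \<Rightarrow> 'v) \<Rightarrow> 'd set set \<Rightarrow> 'v set set \<Rightarrow> 'd set set" where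
  "comp_edges vert B C = {e \<in> B. \<exists>d\<in>e. vert d \<in> \<Union>C}"

(* 2 g(H, K) = 2k(K) + e(K) - v(K) + omega(K) - f(H[K]), with k(K) = 1 *)
definition twice_g ::
  "('d \<Rightarrow> 'v) \<Rightarrow> ('d \<Rightarrow> 'd) \<Rightarrow> ('d \<Rightarrow> 'd) \<Rightarrow> ('v set \<Rightarrow> nat) \<Rightarrow> 'd set set \<Rightarrow> 'v set set \<Rightarrow> int" where
  "twice_g vert r alpha w B C =
     2 * 1 + int (card (comp_edges vert B C)) - int (card C) + int (sum w C)
       - int (n_bdry vert r alpha (\<Union>C) (comp_edges vert B C))"

(* one factor:  z^{n(G(H|B;P))} * prod_{K} zs(2 g(H,K)) ; zs k stands for z_{k/2} *)
definition pk_factor ::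
  "('d \<Rightarrow> 'v) \<Rightarrow> ('d \<Rightarrow> 'd) \<Rightarrow> ('d \<Rightarrow> 'd) \<Rightarrow> 'v set set \<Rightarrow> ('v set \<Rightarrow> nat) \<Rightarrow> 'd set set
     \<Rightarrow> 'r::comm_semiring_1 \<Rightarrow> (int \<Rightarrow> 'r) \<Rightarrow> 'r" where
  "pk_factor vert r alpha P w B z zs =
     z ^ (card B + card (pk_comps vert P B) - card P) *
     (\<Prod>C\<in>pk_comps vert P B. zs (twice_g vert r alpha w B C))"

(* packaged surface Tutte polynomial, evaluated at x, (x_{k/2})_k = xs k, y, (y_{k/2})_k = ys k *)
definition surface_tutte ::
  "('v, 'f, 'd) rgraph \<Rightarrow> 'v set set \<Rightarrow> ('v set \<Rightarrow> nat) \<Rightarrow> 'f set set \<Rightarrow> ('f set \<Rightarrow> nat)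
     \<Rightarrow> 'r::comm_semiring_1 \<Rightarrow> (int \<Rightarrow> 'r) \<Rightarrow> 'r \<Rightarrow> (int \<Rightarrow> 'r) \<Rightarrow> 'r" where
  "surface_tutte G PV wV PF wF x xs y ys =
     (\<Sum>A\<in>Pow (rg_edges G).
        pk_factor (rg_face G) (rg_rot G \<circ> rg_alpha G) (rg_alpha G) PF wF (rg_edges G - A) x xs *
        pk_factor (rg_vert G) (rg_rot G) (rg_alpha G) PV wV A y ys)"

end

theory Submission
  imports Defs
begin

(* The dual has the same edges and rotation rot o alpha, so its face rotation is
   rot o alpha o alpha = rot because alpha is an involution.  Hence the term of
   T(G*; y, x) indexed by the complement E - A is the term of T(G; x, y) indexed by A,
   and A |-> E - A permutes the subsets of E. *)

lemma sum_Pow_Diff: "(\<Sum>A\<in>Pow E. f A) = (\<Sum>A\<in>Pow E. f (E - A))"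
proof -
  have "bij_betw (\<lambda>A. E - A) (Pow E) (Pow E)"
    by (rule bij_betwI[where g = "\<lambda>A. E - A"]) auto
  then show ?thesis
    by (rule sum.reindex_bij_betw[symmetric])
qed

lemma ribbon_graph_alpha_involution:
  assumes "ribbon_graph G"
  shows "rg_alpha G \<circ> rg_alpha G = id"
proof
  fix d
  show "(rg_alpha G \<circ> rg_alpha G) d = id d"
  proof (cases "d \<in> rg_darts G")
    case True
    then show ?thesis using assms unfolding ribbon_graph_def by auto
  next
    case False
    have "rg_alpha G permutes rg_darts G" using assms unfolding ribbon_graph_def by auto
    then show ?thesis using False by (simp add: permutes_not_in)
  qed
qed

lemma rg_dual_dual:
  assumes "ribbon_graph G"
  shows "rg_dual (rg_dual G) = G"
  using ribbon_graph_alpha_involution[OF assms]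
  by (simp add: rg_dual_def comp_assoc)

lemma rg_edges_dual: "rg_edges (rg_dual G) = rg_edges G"
  by (simp add: rg_edges_def rg_dual_def)

lemma surface_tutte_complement:
  "surface_tutte G PV wV PF wF x xs y ys =
     (\<Sum>A\<in>Pow (rg_edges G).
        pk_factor (rg_face G) (rg_rot G \<circ> rg_alpha G) (rg_alpha G) PF wF A x xs *
        pk_factor (rg_vert G) (rg_rot G) (rg_alpha G) PV wV (rg_edges G - A) y ys)"
  unfolding surface_tutte_def
  by (subst sum_Pow_Diff) (intro sum.cong; simp add: double_diff)

theorem theorem3p5:
  fixes G :: "('v, 'f, 'd) rgraph"
    and PV :: "'v set set" and wV :: "'v set \<Rightarrow> nat"
    and PF :: "'f set set" and wF :: "'f set \<Rightarrow> nat"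
    and x y :: "'r::comm_semiring_1" and xs ys :: "int \<Rightarrow> 'r"
  assumes "packaged_rg G PV wV PF wF"
  shows "surface_tutte G PV wV PF wF x xs y ys = surface_tutte (rg_dual G) PF wF PV wV y ys x xs"
proof -
  have "ribbon_graph G"
    using assms unfolding packaged_rg_def by simp
  have "rg_rot (rg_dual G) \<circ> rg_alpha (rg_dual G) = rg_rot (rg_dual (rg_dual G))"
    by (simp add: rg_dual_def)
  also have "\<dots> = rg_rot G"
    using rg_dual_dual[OF \<open>ribbon_graph G\<close>] by simp
  finally have dual_face_rot: "rg_rot (rg_dual G) \<circ> rg_alpha (rg_dual G) = rg_rot G" .
  show ?thesis
    unfolding surface_tutte_complement[of G] surface_tutte_def[of "rg_dual G"]
      rg_edges_dual dual_face_rot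
    by (simp add: rg_dual_def mult.commute)
qed

end
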